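(* Let $F\subset S^3$ be a (connected, oriented) Seifert surface for a knot or link $K$ with $\operatorname{rank}H_1(F;\mathbb Z)=n$, and let $\alpha_1,\dots,\alpha_n$ be pairwise disjoint properly embedded arcs in $F$ such that $F\setminus\bigcup_i\alpha_i$ is a disk. For integers $k_1,\dots,k_n$, let $\widetilde F$ be the surface obtained from $F$ by full-twisting $F$ along each arc $\alpha_i$ exactly $k_i$ times, in the direction for which the Seifert form value of the loop $\ell_i$ dual to $\alpha_i$ (the embedded loop meeting $\bigcup_j\alpha_j$ transversely in exactly one point of $\alpha_i$) increases by $k_i$; and let $\widetilde K=\partial\widetilde F$. Then there exist positive integers $N_1,\dots,N_n$ such that whenever $k_i\ge N_i$ for all $i$, the Alexander polynomial of $\widetilde K$ has degree $n$ and all of its zeros have modulus $1$.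
   Context: The (reduced) Alexander polynomial of a knot or link with Seifert matrix $V$ is $\det(tV-V^T)$. Twisting along $\alpha_i$ changes only the self-linking of $\ell_i$, so a Seifert matrix of $\widetilde F$ with respect to the dual loops is obtained from one of $F$ by adding $k_i$ to the $i$-th diagonal entry. *)

theory Defs
  imports "Jordan_Normal_Form.Determinant" "HOL-Computational_Algebra.Polynomial" Complex_Main
begin

text \<open>A Seifert matrix (n x n, integer entries) is represented as a function
  V :: nat => nat => int, entries with indices below n being relevant.\<close>

definition twisted_seifert :: "(nat \<Rightarrow> nat \<Rightarrow> int) \<Rightarrow> (nat \<Rightarrow> int) \<Rightarrow> nat \<Rightarrow> nat \<Rightarrow> int" where
  "twisted_seifert V k i j = V i j + (if i = j then k i else 0)"

definition alexander_poly :: "nat \<Rightarrow> (nat \<Rightarrow> nat \<Rightarrow> int) \<Rightarrow> int poly" where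
  "alexander_poly n V = det (mat n n (\<lambda>(i, j). [: - V j i, V i j :]))"

end

theory Submission
  imports Defs "Jordan_Normal_Form.Char_Poly"
begin

text \<open>
  Let B = V + diag k be the Seifert matrix of the twisted surface, so that the Alexander
  polynomial is det (t B - B^T).  Once every k i exceeds the sum of the absolute values in
  the i-th row and column of V, the symmetric part of B is positive definite:
  Re (v^* B v) > 0 for every nonzero complex vector v.  Two consequences finish the proof.
  First, B is nonsingular and det (t B - B^T) = det B \<cdot> char_poly (B^-1 B^T), so the degree
  is n.  Second, a root z gives B^T v = z B v with v \<noteq> 0; then z q = conj q for
  q = v^* B v \<noteq> 0, hence |z| = 1.
\<close>

definition pencil :: "'a :: comm_ring_1 mat \<Rightarrow> 'a poly mat" where
  "pencil A = mat (dim_row A) (dim_row A) (\<lambda>(i, j). [: - A $$ (j, i), A $$ (i, j) :])"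

lemma (in comm_ring_hom) map_pencil:
  assumes "A \<in> carrier_mat n n"
  shows "map_mat (map_poly hom) (pencil A) = pencil (mat\<^sub>h A)"
  using assms by (auto simp: pencil_def hom_distribs intro!: eq_matI)

lemma alexander_poly_pencil: "alexander_poly n V = det (pencil (mat n n (\<lambda>(i, j). V i j)))"
  unfolding alexander_poly_def pencil_def by (rule arg_cong[where f = det]) (auto intro!: eq_matI)

lemma pencil_factor:
  assumes A: "A \<in> carrier_mat n n" and C: "C \<in> carrier_mat n n"
    and AC: "A * C = transpose_mat A"
  shows "pencil A = map_mat (\<lambda>a. [:a:]) A * char_poly_matrix C"
proof (rule eq_matI)
  fix i j assume "i < dim_row (map_mat (\<lambda>a. [:a:]) A * char_poly_matrix C)"
    "j < dim_col (map_mat (\<lambda>a. [:a:]) A * char_poly_matrix C)"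
  then have i: "i < n" and j: "j < n" using A char_poly_matrix_closed[OF C] by auto
  have "(map_mat (\<lambda>a. [:a:]) A * char_poly_matrix C) $$ (i, j)
      = (\<Sum>l\<in>{0..<n}. [:A $$ (i, l):] * ((if l = j then [:0, 1:] else 0) + [: - C $$ (l, j) :]))"
    using i j A C by (auto simp: scalar_prod_def char_poly_matrix_def intro!: sum.cong)
  also have "\<dots> = (\<Sum>l\<in>{0..<n}. [:A $$ (i, l):] * (if l = j then [:0, 1:] else 0))
      - [: \<Sum>l\<in>{0..<n}. A $$ (i, l) * C $$ (l, j) :]"
    by (simp add: sum.distrib distrib_left sum_negf mult.commute flip: sum_subtractf)
      (simp add: sum_to_poly sum_negf)
  also have "\<dots> = [:0, A $$ (i, j):] - [: A $$ (j, i) :]"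
  proof -
    have "(A * C) $$ (i, j) = A $$ (j, i)"
      using AC i j A by simp
    then have "(\<Sum>l\<in>{0..<n}. A $$ (i, l) * C $$ (l, j)) = A $$ (j, i)"
      using i j A C by (simp add: scalar_prod_def)
    then show ?thesis
      using j by (simp add: if_distrib cong: if_cong)
  qed
  finally show "pencil A $$ (i, j) = (map_mat (\<lambda>a. [:a:]) A * char_poly_matrix C) $$ (i, j)"
    using i j A by (simp add: pencil_def)
qed (use A char_poly_matrix_closed[OF C] in \<open>auto simp: pencil_def\<close>)

lemma det_pencil_factor:
  assumes A: "A \<in> carrier_mat n n" and C: "C \<in> carrier_mat n n"
    and AC: "A * C = transpose_mat A"
  shows "det (pencil A) = [:det A:] * char_poly C"
proof -
  interpret const: comm_ring_hom "\<lambda>a :: 'a. [:a:]"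
    by unfold_locales auto
  have "det (pencil A) = det (map_mat (\<lambda>a. [:a:]) A) * det (char_poly_matrix C)"
    unfolding pencil_factor[OF A C AC] using A C by (intro det_mult[of _ n]) auto
  then show ?thesis
    unfolding char_poly_def const.hom_det .
qed

lemma transpose_quotient_exists:
  fixes A :: "'a :: field mat"
  assumes A: "A \<in> carrier_mat n n" and detA: "det A \<noteq> 0"
  obtains C where "C \<in> carrier_mat n n" "A * C = transpose_mat A"
proof -
  obtain B where B: "B \<in> carrier_mat n n" "A * B = 1\<^sub>m n"
    using det_non_zero_imp_unit[OF A detA, unfolded Units_def, of "()"]
    by (auto simp: ring_mat_def)
  have "A * (B * transpose_mat A) = transpose_mat A"
    using A B by (simp flip: assoc_mult_mat[of A n n B n "transpose_mat A" n])
  with B A show ?thesis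
    using that[of "B * transpose_mat A"] by simp
qed

text \<open>For nonsingular A the pencil determinant is det A times a monic polynomial of
  degree n, hence has degree exactly n.\<close>
lemma degree_det_pencil:
  fixes A :: "'a :: field mat"
  assumes A: "A \<in> carrier_mat n n" and detA: "det A \<noteq> 0"
  shows "degree (det (pencil A)) = n"
proof -
  obtain C where C: "C \<in> carrier_mat n n" "A * C = transpose_mat A"
    using transpose_quotient_exists[OF A detA] .
  show ?thesis
    using det_pencil_factor[OF A C] degree_monic_char_poly[OF C(1)] detA by simp
qed

text \<open>Every root z of det (t A - A^T), A nonsingular, is a generalised eigenvalue:
  A^T v = z A v for some nonzero v (an eigenvector of C = A^-1 A^T).\<close>
lemma root_det_pencil:
  fixes A :: "'a :: field mat"
  assumes A: "A \<in> carrier_mat n n" and detA: "det A \<noteq> 0"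
    and root: "poly (det (pencil A)) z = 0"
  obtains v where "v \<in> carrier_vec n" "v \<noteq> 0\<^sub>v n" "transpose_mat A *\<^sub>v v = z \<cdot>\<^sub>v (A *\<^sub>v v)"
proof -
  obtain C where C: "C \<in> carrier_mat n n" "A * C = transpose_mat A"
    using transpose_quotient_exists[OF A detA] .
  have "eigenvalue C z"
    using root det_pencil_factor[OF A C] detA eigenvalue_root_char_poly[OF C(1)] by simp
  then obtain v where v: "v \<in> carrier_vec n" "v \<noteq> 0\<^sub>v n" "C *\<^sub>v v = z \<cdot>\<^sub>v v"
    unfolding eigenvalue_def eigenvector_def using C by auto
  have "transpose_mat A *\<^sub>v v = A *\<^sub>v (C *\<^sub>v v)"
    using A C v(1) by (metis assoc_mult_mat_vec)
  also have "\<dots> = z \<cdot>\<^sub>v (A *\<^sub>v v)"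
    using A v by (simp add: mult_mat_vec)
  finally show ?thesis
    using that v(1,2) by blast
qed

definition herm_form :: "nat \<Rightarrow> (nat \<Rightarrow> nat \<Rightarrow> complex) \<Rightarrow> (nat \<Rightarrow> complex) \<Rightarrow> complex" where
  "herm_form n a v = (\<Sum>i<n. \<Sum>j<n. cnj (v i) * a i j * v j)"

lemma herm_form_mat:
  assumes "v \<in> carrier_vec n"
  shows "herm_form n a (\<lambda>i. v $ i) = (mat n n (\<lambda>(i, j). a i j) *\<^sub>v v) \<bullet>c v"
  using assms
  by (auto simp: herm_form_def scalar_prod_def sum_distrib_left mult_ac atLeast0LessThan
      intro!: sum.cong)

lemma herm_form_transpose_real:
  "herm_form n (\<lambda>i j. complex_of_real (M j i)) v
    = cnj (herm_form n (\<lambda>i j. complex_of_real (M i j)) v)"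
  unfolding herm_form_def by (subst sum.swap) (simp add: mult_ac)

lemma re_herm_form_real:
  "Re (herm_form n (\<lambda>i j. complex_of_real (M i j)) v)
    = (\<Sum>i<n. \<Sum>j<n. M i j * Re (cnj (v i) * v j))"
  by (simp add: herm_form_def algebra_simps)

text \<open>An off-diagonal term is bounded below, using
  |Re (conj x y)| \<le> |x| |y| \<le> (|x|^2 + |y|^2) / 2.\<close>
lemma cross_term_lower_bound:
  fixes m :: real and x y :: complex
  shows "- (\<bar>m\<bar> * ((cmod x)\<^sup>2 + (cmod y)\<^sup>2) / 2) \<le> m * Re (cnj x * y)"
proof -
  have "\<bar>Re (cnj x * y)\<bar> \<le> cmod x * cmod y"
    using abs_Re_le_cmod[of "cnj x * y"] by (simp add: norm_mult)
  also have "\<dots> \<le> ((cmod x)\<^sup>2 + (cmod y)\<^sup>2) / 2"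
    using zero_le_power2[of "cmod x - cmod y"] by (simp add: power2_diff field_simps)
  finally have "\<bar>m * Re (cnj x * y)\<bar> \<le> \<bar>m\<bar> * (((cmod x)\<^sup>2 + (cmod y)\<^sup>2) / 2)"
    unfolding abs_mult by (rule mult_left_mono) simp
  then show ?thesis
    by linarith
qed

lemma herm_form_diag_dominant_pos:
  fixes V :: "nat \<Rightarrow> nat \<Rightarrow> real" and d :: "nat \<Rightarrow> real" and v :: "nat \<Rightarrow> complex"
  assumes dom: "\<And>i. i < n \<Longrightarrow> (\<Sum>j<n. \<bar>V i j\<bar> + \<bar>V j i\<bar>) < 2 * d i"
    and nz: "i0 < n" "v i0 \<noteq> 0"
  shows "Re (herm_form n (\<lambda>i j. complex_of_real (V i j + (if i = j then d i else 0))) v) > 0"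
proof -
  define w where "w i = (cmod (v i))\<^sup>2" for i
  define R where "R i = (\<Sum>j<n. \<bar>V i j\<bar> + \<bar>V j i\<bar>)" for i
  have split: "Re (herm_form n (\<lambda>i j. complex_of_real (V i j + (if i = j then d i else 0))) v)
      = (\<Sum>i<n. \<Sum>j<n. V i j * Re (cnj (v i) * v j)) + (\<Sum>i<n. d i * w i)"
  proof -
    have re_cnj_mult_self: "Re (cnj x * x) = (cmod x)\<^sup>2" for x :: complex
      by (simp add: cmod_power2 flip: power2_eq_square)
    have "Re (herm_form n (\<lambda>i j. complex_of_real (V i j + (if i = j then d i else 0))) v)
        = (\<Sum>i<n. \<Sum>j<n. V i j * Re (cnj (v i) * v j)
             + (if i = j then d i * Re (cnj (v i) * v j) else 0))"
      unfolding re_herm_form_real by (intro sum.cong refl) (auto simp: distrib_right)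
    also have "\<dots> = (\<Sum>i<n. \<Sum>j<n. V i j * Re (cnj (v i) * v j))
        + (\<Sum>i<n. d i * Re (cnj (v i) * v i))"
      by (simp add: sum.distrib)
    finally show ?thesis
      by (simp only: w_def re_cnj_mult_self)
  qed
  have "(\<Sum>i<n. \<Sum>j<n. V i j * Re (cnj (v i) * v j))
      \<ge> (\<Sum>i<n. \<Sum>j<n. - (\<bar>V i j\<bar> * (w i + w j) / 2))"
    unfolding w_def by (intro sum_mono cross_term_lower_bound)
  also have "(\<Sum>i<n. \<Sum>j<n. - (\<bar>V i j\<bar> * (w i + w j) / 2)) = - (\<Sum>i<n. R i * w i / 2)"
  proof -
    have "(\<Sum>i<n. \<Sum>j<n. \<bar>V i j\<bar> * w j) = (\<Sum>i<n. \<Sum>j<n. \<bar>V j i\<bar> * w i)"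
      by (rule sum.swap)
    then show ?thesis
      unfolding R_def
      by (simp add: sum_negf sum_divide_distrib distrib_left distrib_right sum.distrib
          sum_distrib_right flip: sum_divide_distrib)
  qed
  finally have cross:
    "(\<Sum>i<n. \<Sum>j<n. V i j * Re (cnj (v i) * v j)) \<ge> - (\<Sum>i<n. R i * w i / 2)" .
  have "(\<Sum>i<n. (d i - R i / 2) * w i) > 0"
  proof (rule sum_pos2)
    show "i0 \<in> {..<n}" using nz by simp
    show "(d i0 - R i0 / 2) * w i0 > 0"
      using dom[OF nz(1)] nz(2) unfolding R_def w_def by simp
    show "0 \<le> (d i - R i / 2) * w i" if "i \<in> {..<n}" for i
      using dom[of i] that unfolding R_def w_def by simp
  qed simp
  then have "(\<Sum>i<n. d i * w i) > (\<Sum>i<n. R i * w i / 2)"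
    by (simp add: left_diff_distrib sum_subtractf)
  then show ?thesis
    using split cross by linarith
qed

lemma transpose_mat_of_fun:
  "transpose_mat (mat n n (\<lambda>(i, j). a i j)) = mat n n (\<lambda>(i, j). a j i)"
  by (rule eq_matI) auto

text \<open>A matrix whose Hermitian form has positive real part on nonzero vectors is nonsingular,
  since a kernel vector would make the form vanish.\<close>
lemma det_nonzero_if_herm_pos:
  assumes pos: "\<And>v. v \<in> carrier_vec n \<Longrightarrow> v \<noteq> 0\<^sub>v n \<Longrightarrow> Re (herm_form n a (\<lambda>i. v $ i)) > 0"
  shows "det (mat n n (\<lambda>(i, j). a i j)) \<noteq> 0"
proof
  assume "det (mat n n (\<lambda>(i, j). a i j)) = 0"
  then obtain v where v: "v \<in> carrier_vec n" "v \<noteq> 0\<^sub>v n" "mat n n (\<lambda>(i, j). a i j) *\<^sub>v v = 0\<^sub>v n"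
    using det_0_iff_vec_prod_zero_field[of "mat n n (\<lambda>(i, j). a i j)" n] by auto
  then have "herm_form n a (\<lambda>i. v $ i) = 0"
    unfolding herm_form_mat[OF v(1)] by simp
  with pos[OF v(1,2)] show False
    by simp
qed

text \<open>The key step: if A is real, A^T v = z A v and q = v^* A v has positive real part,
  then z q = v^* A^T v = conj q with q \<noteq> 0, so |z| = 1.\<close>
lemma eigen_ratio_unimodular_if_herm_pos:
  fixes n :: nat and M :: "nat \<Rightarrow> nat \<Rightarrow> real" and v :: "complex vec" and z :: complex
  defines "A \<equiv> mat n n (\<lambda>(i, j). complex_of_real (M i j))"
  assumes pos: "Re (herm_form n (\<lambda>i j. complex_of_real (M i j)) (\<lambda>i. v $ i)) > 0"
    and v: "v \<in> carrier_vec n" and eigen: "transpose_mat A *\<^sub>v v = z \<cdot>\<^sub>v (A *\<^sub>v v)"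
  shows "cmod z = 1"
proof -
  define q where "q = herm_form n (\<lambda>i j. complex_of_real (M i j)) (\<lambda>i. v $ i)"
  have "cnj q = herm_form n (\<lambda>i j. complex_of_real (M j i)) (\<lambda>i. v $ i)"
    unfolding q_def by (rule herm_form_transpose_real[symmetric])
  also have "\<dots> = (transpose_mat A *\<^sub>v v) \<bullet>c v"
    unfolding A_def transpose_mat_of_fun by (rule herm_form_mat[OF v])
  also have "\<dots> = z * ((A *\<^sub>v v) \<bullet>c v)"
  proof -
    have "A \<in> carrier_mat n n"
      unfolding A_def by simp
    then show ?thesis
      unfolding eigen using v
      by (intro smult_scalar_prod_distrib[of _ n] mult_mat_vec_carrier carrier_vec_conjugate)
  qed
  also have "\<dots> = z * q"
    unfolding q_def A_def herm_form_mat[OF v] ..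
  finally have "cmod (cnj q) = cmod (z * q)"
    by (rule arg_cong)
  then have "cmod z * cmod q = 1 * cmod q"
    by (simp only: complex_mod_cnj norm_mult mult_1)
  moreover have "cmod q \<noteq> 0"
    using pos unfolding q_def by auto
  ultimately show ?thesis
    by (rule mult_right_cancel[THEN iffD1, rotated])
qed

lemma alexander_poly_complex_pencil:
  "map_poly complex_of_int (alexander_poly n B)
    = det (pencil (mat n n (\<lambda>(i, j). complex_of_int (B i j))))"
proof -
  have hom: "comm_ring_hom (map_poly complex_of_int)"
    by unfold_locales (simp_all add: hom_distribs)
  have "map_poly complex_of_int (alexander_poly n B)
      = det (map_mat (map_poly complex_of_int) (pencil (mat n n (\<lambda>(i, j). B i j))))"
    unfolding alexander_poly_pencil by (rule comm_ring_hom.hom_det[OF hom, symmetric])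
  also have "map_mat (map_poly complex_of_int) (pencil (mat n n (\<lambda>(i, j). B i j)))
      = pencil (mat n n (\<lambda>(i, j). complex_of_int (B i j)))"
    by (subst of_int_hom.map_pencil[of _ n]) (auto intro!: arg_cong[where f = pencil])
  finally show ?thesis .
qed

lemma alexander_poly_unimodular_if_herm_pos:
  fixes B :: "nat \<Rightarrow> nat \<Rightarrow> int"
  assumes pos: "\<And>v. v \<in> carrier_vec n \<Longrightarrow> v \<noteq> 0\<^sub>v n \<Longrightarrow>
      Re (herm_form n (\<lambda>i j. complex_of_int (B i j)) (\<lambda>i. v $ i)) > 0"
  shows "degree (alexander_poly n B) = n"
    and "poly (map_poly complex_of_int (alexander_poly n B)) z = 0 \<Longrightarrow> cmod z = 1"
proof -
  define A where "A = mat n n (\<lambda>(i, j). complex_of_int (B i j))"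
  have A: "A \<in> carrier_mat n n"
    unfolding A_def by simp
  have detA: "det A \<noteq> 0"
    unfolding A_def using pos by (rule det_nonzero_if_herm_pos)
  have "degree (alexander_poly n B) = degree (map_poly complex_of_int (alexander_poly n B))"
    by simp
  also have "\<dots> = n"
    unfolding alexander_poly_complex_pencil A_def[symmetric]
    using A detA by (rule degree_det_pencil)
  finally show "degree (alexander_poly n B) = n" .
  assume "poly (map_poly complex_of_int (alexander_poly n B)) z = 0"
  then obtain v where v: "v \<in> carrier_vec n" "v \<noteq> 0\<^sub>v n" "transpose_mat A *\<^sub>v v = z \<cdot>\<^sub>v (A *\<^sub>v v)"
    unfolding alexander_poly_complex_pencil A_def[symmetric] by (rule root_det_pencil[OF A detA])
  show "cmod z = 1"
    using eigen_ratio_unimodular_if_herm_pos[of n "\<lambda>i j. real_of_int (B i j)" v z] pos[OF v(1,2)] v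
    unfolding A_def by simp
qed

text \<open>A number of twists along the i-th arc that suffices: it makes the twisted Seifert matrix
  diagonally dominant.\<close>
definition twist_bound :: "nat \<Rightarrow> (nat \<Rightarrow> nat \<Rightarrow> int) \<Rightarrow> nat \<Rightarrow> int" where
  "twist_bound n V i = 1 + (\<Sum>j<n. \<bar>V i j\<bar> + \<bar>V j i\<bar>)"

lemma twist_bound_pos: "twist_bound n V i > 0"
  unfolding twist_bound_def by (simp add: add_pos_nonneg sum_nonneg)

lemma twisted_seifert_herm_pos:
  assumes k: "\<And>i. i < n \<Longrightarrow> k i \<ge> twist_bound n V i"
    and v: "v \<in> carrier_vec n" "v \<noteq> 0\<^sub>v n"
  shows "Re (herm_form n (\<lambda>i j. complex_of_int (twisted_seifert V k i j)) (\<lambda>i. v $ i)) > 0"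
proof -
  obtain i0 where i0: "i0 < n" "v $ i0 \<noteq> 0"
    using v by (metis carrier_vecD eq_vecI index_zero_vec(1,2))
  have dom: "(\<Sum>j<n. \<bar>real_of_int (V i j)\<bar> + \<bar>real_of_int (V j i)\<bar>) < 2 * real_of_int (k i)"
    if "i < n" for i
  proof -
    have "0 \<le> (\<Sum>j<n. \<bar>V i j\<bar> + \<bar>V j i\<bar>)"
      by (simp add: sum_nonneg)
    with k[OF that] have "(\<Sum>j<n. \<bar>V i j\<bar> + \<bar>V j i\<bar>) < 2 * k i"
      unfolding twist_bound_def by linarith
    then have "real_of_int (\<Sum>j<n. \<bar>V i j\<bar> + \<bar>V j i\<bar>) < real_of_int (2 * k i)"
      by (simp only: of_int_less_iff)
    then show ?thesis
      by simp
  qed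
  have entries: "complex_of_int (twisted_seifert V k i j)
      = complex_of_real (real_of_int (V i j) + (if i = j then real_of_int (k i) else 0))" for i j
    by (simp add: twisted_seifert_def)
  show ?thesis
    unfolding entries using dom i0 by (rule herm_form_diag_dominant_pos)
qed

theorem theorem12p9:
  fixes n :: nat and V :: "nat \<Rightarrow> nat \<Rightarrow> int"
  shows "\<exists>N :: nat \<Rightarrow> int. (\<forall>i<n. N i > 0) \<and>
     (\<forall>k :: nat \<Rightarrow> int. (\<forall>i<n. k i \<ge> N i) \<longrightarrow>
        degree (alexander_poly n (twisted_seifert V k)) = n \<and>
        (\<forall>z :: complex. poly (map_poly of_int (alexander_poly n (twisted_seifert V k))) z = 0
            \<longrightarrow> cmod z = 1))"
proof -
  have unimodular: "degree (alexander_poly n (twisted_seifert V k)) = n \<and>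
      (\<forall>z :: complex. poly (map_poly of_int (alexander_poly n (twisted_seifert V k))) z = 0
          \<longrightarrow> cmod z = 1)"
    if "\<forall>i<n. k i \<ge> twist_bound n V i" for k
  proof -
    have pos: "\<And>v. v \<in> carrier_vec n \<Longrightarrow> v \<noteq> 0\<^sub>v n \<Longrightarrow>
        Re (herm_form n (\<lambda>i j. complex_of_int (twisted_seifert V k i j)) (\<lambda>i. v $ i)) > 0"
      using that by (intro twisted_seifert_herm_pos) auto
    show ?thesis
      using alexander_poly_unimodular_if_herm_pos[OF pos] by blast
  qed
  show ?thesis
    using twist_bound_pos unimodular by blast
qed

end
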